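(* Let $k \geq 5$ be an integer. If $c$ is a rational number such that $\mathcal{G}[\{C_k\}, c]$ is finite and $\mathcal{G}(\{C_k\}, c)^*$ is infinite (that is, $c = c(C_k)$ exists), then \[c \geq \frac{2}{2k+1}.\]
   Context: Graphs are finite and simple; $C_k$ is the cycle on $k$ vertices. For $D \subseteq V(G)$, $N[D]$ is the union of closed neighbourhoods of vertices of $D$. For a set $\mathcal{F}$ of graphs, $D$ is $\mathcal{F}$-isolating if $G - N[D]$ contains no subgraph isomorphic to a member of $\mathcal{F}$, and $\iota(G,\mathcal{F})$ is the minimum size of such a set. Let $\mathcal{G}$ be the set of connected graphs $G$ with $V(G) = [n]$ for some $n \geq 1$. For real $\alpha > 0$, $\mathcal{G}(\mathcal{F},\alpha) = \{G \in \mathcal{G} : \iota(G,\mathcal{F}) \le \lfloor \alpha|V(G)| \rfloor\}$, $\mathcal{G}(\mathcal{F},\alpha)^* = \{G \in \mathcal{G}(\mathcal{F},\alpha) : \iota(G,\mathcal{F}) = \lfloor \alpha |V(G)|\rfloor\}$, and $\mathcal{G}[\mathcal{F},\alpha] = \mathcal{G} \setminus \mathcal{G}(\mathcal{F},\alpha)$. The number $c(\mathcal{F})$, when it exists, is a rational number such that $\mathcal{G}[\mathcal{F},c(\mathcal{F})]$ is finite and $\mathcal{G}(\mathcal{F},c(\mathcal{F}))^*$ is infinite. *)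

theory Defs
  imports Complex_Main
begin

text \<open>A graph with vertex set [n] = {1..n} is a pair (n, E), E a set of 2-element
  subsets of {1..n}.\<close>
type_synonym graph = "nat \<times> nat set set"

definition verts :: "graph \<Rightarrow> nat set" where
  "verts G = {1..fst G}"

definition edges :: "graph \<Rightarrow> nat set set" where
  "edges G = snd G"

definition simple_graph :: "graph \<Rightarrow> bool" where
  "simple_graph G \<longleftrightarrow> (\<forall>e\<in>edges G. card e = 2 \<and> e \<subseteq> verts G)"

definition adj :: "graph \<Rightarrow> nat \<Rightarrow> nat \<Rightarrow> bool" where
  "adj G u v \<longleftrightarrow> {u, v} \<in> edges G"

definition connected_graph :: "graph \<Rightarrow> bool" where
  "connected_graph G \<longleftrightarrow>
     (\<forall>u\<in>verts G. \<forall>v\<in>verts G. (u, v) \<in> {(x, y). adj G x y}\<^sup>*)"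

definition conn_graphs :: "graph set" where
  "conn_graphs = {G. fst G \<ge> 1 \<and> simple_graph G \<and> connected_graph G}"

definition closed_nbhd :: "graph \<Rightarrow> nat set \<Rightarrow> nat set" where
  "closed_nbhd G D = D \<union> {v \<in> verts G. \<exists>u\<in>D. adj G u v}"

definition subgraph_iso_in :: "graph \<Rightarrow> graph \<Rightarrow> nat set \<Rightarrow> bool" where
  "subgraph_iso_in H G S \<longleftrightarrow>
     (\<exists>f. inj_on f (verts H) \<and> f ` verts H \<subseteq> S \<and>
          (\<forall>a\<in>verts H. \<forall>b\<in>verts H. adj H a b \<longrightarrow> adj G (f a) (f b)))"

definition isolating :: "graph \<Rightarrow> graph set \<Rightarrow> nat set \<Rightarrow> bool" where
  "isolating G F D \<longleftrightarrow> D \<subseteq> verts G \<and>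
     (\<forall>H\<in>F. \<not> subgraph_iso_in H G (verts G - closed_nbhd G D))"

definition iota :: "graph \<Rightarrow> graph set \<Rightarrow> nat" where
  "iota G F = (LEAST m. \<exists>D. isolating G F D \<and> card D = m)"

definition cycle_graph :: "nat \<Rightarrow> graph" where
  "cycle_graph k = (k, {{i, i + 1} | i. 1 \<le> i \<and> i < k} \<union> {{k, 1}})"

definition G_le :: "graph set \<Rightarrow> real \<Rightarrow> graph set" where
  "G_le F \<alpha> = {G \<in> conn_graphs. real (iota G F) \<le> of_int \<lfloor>\<alpha> * real (fst G)\<rfloor>}"

definition G_eq :: "graph set \<Rightarrow> real \<Rightarrow> graph set" where
  "G_eq F \<alpha> = {G \<in> G_le F \<alpha>. real (iota G F) = of_int \<lfloor>\<alpha> * real (fst G)\<rfloor>}"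

definition G_gt :: "graph set \<Rightarrow> real \<Rightarrow> graph set" where
  "G_gt F \<alpha> = conn_graphs - G_le F \<alpha>"

end

theory Submission
  imports Defs "HOL-Number_Theory.Cong"
begin

text \<open>If \<open>c < 2 / (2k + 1)\<close>, there are infinitely many connected graphs outside
  \<open>\<G>(C\<^sub>k, c)\<close>. Take \<open>m\<close> copies of the square of the cycle \<open>C\<^sub>2\<^sub>k\<close>, attach to each a
  pendant hub adjacent to one ring vertex, and join the hubs by a path; the result is connected
  with \<open>m(2k + 1)\<close> vertices. Inside one copy, the closed neighbourhood of a single vertex covers
  at most five consecutive ring positions, and any \<open>k \<le> 2k - 5\<close> consecutive positions of the
  square of a cycle carry a copy of \<open>C\<^sub>k\<close> (visit the even offsets upwards and the odd ones
  downwards). So every \<open>C\<^sub>k\<close>-isolating set meets each copy twice, whence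
  \<open>\<iota> \<ge> 2m > c \<cdot> m(2k + 1)\<close>.\<close>

lemma connected_graphI_root:
  assumes "\<And>v. v \<in> verts G \<Longrightarrow> (v, r) \<in> {(x, y). adj G x y}\<^sup>*"
  shows "connected_graph G"
proof -
  have "sym {(x, y). adj G x y}" by (auto simp: sym_def adj_def insert_commute)
  then have "sym ({(x, y). adj G x y}\<^sup>*)" by (rule sym_rtrancl)
  then show ?thesis unfolding connected_graph_def using assms by (meson rtrancl_trans symD)
qed

lemma finite_isolating: "isolating G F D \<Longrightarrow> finite D"
  unfolding isolating_def verts_def using finite_subset by blast

lemma isolating_verts:
  assumes "\<And>H. H \<in> F \<Longrightarrow> fst H \<ge> 1"
  shows "isolating G F (verts G)"
proof -
  have nothing_left: "verts G - closed_nbhd G (verts G) = {}"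
    unfolding closed_nbhd_def by auto
  have "\<not> subgraph_iso_in H G {}" if "H \<in> F" for H
    using assms[OF that] by (auto simp: subgraph_iso_in_def verts_def)
  then show ?thesis unfolding isolating_def nothing_left by simp
qed

lemma iota_geI:
  assumes "\<And>H. H \<in> F \<Longrightarrow> fst H \<ge> 1"
    and "\<And>D. isolating G F D \<Longrightarrow> b \<le> card D"
  shows "b \<le> iota G F"
proof -
  have "\<exists>D. isolating G F D \<and> card D = iota G F"
    unfolding iota_def
    by (rule LeastI[of _ "card (verts G)"]) (use isolating_verts[OF assms(1)] in blast)
  then show ?thesis using assms(2) by metis
qed

lemma G_gtI:
  assumes "G \<in> conn_graphs" and "\<alpha> * real (fst G) < real (iota G F)"
  shows "G \<in> G_gt F \<alpha>"
proof -
  have "of_int \<lfloor>\<alpha> * real (fst G)\<rfloor> < real (iota G F)"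
    using of_int_floor_le assms(2) by (rule le_less_trans)
  then show ?thesis using assms(1) unfolding G_gt_def G_le_def by auto
qed

lemma mult_le_card_fibres:
  fixes g :: "'a \<Rightarrow> nat"
  assumes "finite D" and "\<And>i. i < m \<Longrightarrow> b \<le> card {v \<in> D. g v = i}"
  shows "m * b \<le> card D"
proof -
  have "m * b = (\<Sum>i<m. b)" by simp
  also have "\<dots> \<le> (\<Sum>i<m. card {v \<in> D. g v = i})" by (rule sum_mono) (rule assms(2); simp)
  also have "\<dots> = card (\<Union>i<m. {v \<in> D. g v = i})"
    by (rule card_UN_disjoint[symmetric]) (use assms(1) in auto)
  also have "\<dots> \<le> card D" by (rule card_mono[OF assms(1)]) auto
  finally show ?thesis .
qed

definition rel_graph :: "nat \<Rightarrow> (nat \<Rightarrow> nat \<Rightarrow> bool) \<Rightarrow> graph" where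
  "rel_graph n R = (n, {{u, v} | u v. u \<in> {1..n} \<and> v \<in> {1..n} \<and> R u v})"

lemma verts_rel_graph: "verts (rel_graph n R) = {1..n}"
  by (simp add: verts_def rel_graph_def)

lemma adj_rel_graph:
  "adj (rel_graph n R) u v \<longleftrightarrow> u \<in> {1..n} \<and> v \<in> {1..n} \<and> (R u v \<or> R v u)"
  unfolding adj_def edges_def rel_graph_def by (auto simp: doubleton_eq_iff)

lemma simple_rel_graph:
  assumes "\<And>u. \<not> R u u"
  shows "simple_graph (rel_graph n R)"
  unfolding simple_graph_def verts_rel_graph
  using assms by (auto simp: edges_def rel_graph_def card_insert_if)

section \<open>The square of a cycle\<close>

lemma mod_add_left_inj:
  fixes x s t N :: nat
  assumes "s < N" "t < N" "(x + s) mod N = (x + t) mod N"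
  shows "s = t"
  using assms cong_add_lcancel_nat[of x s t N] cong_less_modulus_unique_nat
  unfolding cong_def by blast

text \<open>Edges of the square of \<open>C\<^sub>N\<close> on the positions \<open>0, \<dots>, N - 1\<close>,
  each in one orientation.\<close>

definition cycle_sq_step :: "nat \<Rightarrow> nat \<Rightarrow> nat \<Rightarrow> bool" where
  "cycle_sq_step N p q \<longleftrightarrow> q = Suc p mod N \<or> q = (p + 2) mod N"

lemma cycle_sq_step_irrefl: "N \<ge> 3 \<Longrightarrow> p < N \<Longrightarrow> \<not> cycle_sq_step N p p"
  unfolding cycle_sq_step_def by (auto simp: mod_Suc le_mod_geq)

lemma cycle_sq_step_shift:
  assumes "t \<in> {s + 1, s + 2}"
  shows "cycle_sq_step N ((x + s) mod N) ((x + t) mod N)"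
  using assms unfolding cycle_sq_step_def by (auto simp: mod_Suc_eq mod_Suc_Suc_eq)

lemma cycle_sq_step_far:
  assumes "q < N" and "s + 6 \<le> N" and "p = (q + 3 + s) mod N"
  shows "p \<noteq> q \<and> \<not> cycle_sq_step N q p \<and> \<not> cycle_sq_step N p q"
proof -
  have "p = (if q + 3 + s < N then q + 3 + s else q + 3 + s - N)"
    using assms by (simp add: le_mod_geq)
  moreover have "p < N" using assms by simp
  ultimately show ?thesis using assms(1,2) unfolding cycle_sq_step_def
    by (auto simp: mod_Suc le_mod_geq)
qed

text \<open>Listing the vertices \<open>1, \<dots>, k\<close> of \<open>C\<^sub>k\<close> as the offsets \<open>0, 2, 4, \<dots>\<close> followed by
  \<open>\<dots>, 5, 3, 1\<close> moves consecutive vertices by one or two: a Hamiltonian cycle in the square of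
  the path \<open>0, \<dots>, k - 1\<close>.\<close>

definition zigzag :: "nat \<Rightarrow> nat \<Rightarrow> nat" where
  "zigzag k a = (if 2 * (a - 1) < k then 2 * (a - 1) else 2 * (k - a) + 1)"

lemma zigzag_less: "a \<in> {1..k} \<Longrightarrow> zigzag k a < k"
  unfolding zigzag_def by auto

lemma inj_on_zigzag: "inj_on (zigzag k) {1..k}"
proof (rule inj_onI)
  fix a b assume "a \<in> {1..k}" "b \<in> {1..k}" "zigzag k a = zigzag k b"
  moreover have "(2 * x :: nat) \<noteq> 2 * y + 1" for x y by presburger
  ultimately show "a = b" unfolding zigzag_def by (auto split: if_splits dest: sym)
qed

lemma zigzag_adjacent:
  assumes "k \<ge> 2" and "adj (cycle_graph k) a b"
  shows "zigzag k b \<in> {zigzag k a + 1, zigzag k a + 2}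
    \<or> zigzag k a \<in> {zigzag k b + 1, zigzag k b + 2}"
proof -
  have "(\<exists>i. 1 \<le> i \<and> i < k \<and> {a, b} = {i, i + 1}) \<or> {a, b} = {k, 1}"
    using assms(2) unfolding adj_def edges_def cycle_graph_def by auto
  then show ?thesis
    using assms(1) unfolding zigzag_def by (auto simp: doubleton_eq_iff split: if_splits)
qed

text \<open>The offset \<open>3\<close> keeps the \<open>k\<close> positions used clear of \<open>q\<close> and its four neighbours
  in the square of \<open>C\<^sub>2\<^sub>k\<close>, as long as \<open>k \<ge> 5\<close>.\<close>

definition zigzag_slot :: "nat \<Rightarrow> nat \<Rightarrow> nat \<Rightarrow> nat" where
  "zigzag_slot k q a = (q + 3 + zigzag k a) mod (2 * k)"

lemma zigzag_slot_less: "k \<ge> 1 \<Longrightarrow> zigzag_slot k q a < 2 * k"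
  unfolding zigzag_slot_def by simp

lemma zigzag_slot_far:
  assumes "k \<ge> 5" and "q < 2 * k" and "a \<in> {1..k}"
  shows "zigzag_slot k q a \<noteq> q \<and> \<not> cycle_sq_step (2 * k) q (zigzag_slot k q a)
    \<and> \<not> cycle_sq_step (2 * k) (zigzag_slot k q a) q"
proof -
  have "zigzag k a + 6 \<le> 2 * k" using zigzag_less[OF assms(3)] assms(1) by simp
  then show ?thesis using cycle_sq_step_far[OF assms(2)] unfolding zigzag_slot_def by blast
qed

lemma inj_on_zigzag_slot: "inj_on (zigzag_slot k q) {1..k}"
proof (rule inj_onI)
  fix a b assume a: "a \<in> {1..k}" and b: "b \<in> {1..k}"
    and eq: "zigzag_slot k q a = zigzag_slot k q b"
  have "zigzag k a = zigzag k b"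
    using eq unfolding zigzag_slot_def
    by (rule mod_add_left_inj[rotated 2]) (use zigzag_less[OF a] zigzag_less[OF b] in simp_all)
  then show "a = b" using inj_onD[OF inj_on_zigzag] a b by blast
qed

lemma zigzag_slot_adjacent:
  assumes "k \<ge> 2" and "adj (cycle_graph k) a b"
  shows "cycle_sq_step (2 * k) (zigzag_slot k q a) (zigzag_slot k q b)
    \<or> cycle_sq_step (2 * k) (zigzag_slot k q b) (zigzag_slot k q a)"
  using zigzag_adjacent[OF assms] unfolding zigzag_slot_def
  by (elim disjE) (simp_all add: cycle_sq_step_shift)

section \<open>The gadget chain\<close>

text \<open>Vertex \<open>v\<close> lies in copy \<open>block k v\<close> at position \<open>slot k v\<close>;
  positions \<open>0, \<dots>, 2k - 1\<close> form the ring (the square of \<open>C\<^sub>2\<^sub>k\<close>), position \<open>2k\<close> is the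
  hub, adjacent to ring position \<open>0\<close> and to the hubs of the neighbouring copies.\<close>

definition block :: "nat \<Rightarrow> nat \<Rightarrow> nat" where
  "block k v = (v - 1) div (2 * k + 1)"

definition slot :: "nat \<Rightarrow> nat \<Rightarrow> nat" where
  "slot k v = (v - 1) mod (2 * k + 1)"

definition block_vertex :: "nat \<Rightarrow> nat \<Rightarrow> nat \<Rightarrow> nat" where
  "block_vertex k i p = i * (2 * k + 1) + p + 1"

definition gadget_rel :: "nat \<Rightarrow> nat \<Rightarrow> nat \<Rightarrow> bool" where
  "gadget_rel k u v \<longleftrightarrow>
     block k u = block k v \<and> slot k u < 2 * k \<and> slot k v < 2 * k \<and>
       cycle_sq_step (2 * k) (slot k u) (slot k v)
   \<or> block k u = block k v \<and> slot k u = 2 * k \<and> slot k v = 0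
   \<or> slot k u = 2 * k \<and> slot k v = 2 * k \<and> block k v = Suc (block k u)"

definition gadget_chain :: "nat \<Rightarrow> nat \<Rightarrow> graph" where
  "gadget_chain k m = rel_graph (m * (2 * k + 1)) (gadget_rel k)"

lemma verts_gadget_chain: "verts (gadget_chain k m) = {1..m * (2 * k + 1)}"
  by (simp add: gadget_chain_def verts_rel_graph)

lemma block_slot_block_vertex:
  assumes "p < 2 * k + 1"
  shows "block k (block_vertex k i p) = i" "slot k (block_vertex k i p) = p"
proof -
  have shift: "block_vertex k i p - 1 = p + (2 * k + 1) * i" unfolding block_vertex_def by simp
  have "(p + s * i) div s = i \<and> (p + s * i) mod s = p" if "p < s" for s
    using that by simp
  then show "block k (block_vertex k i p) = i" "slot k (block_vertex k i p) = p"
    unfolding block_def slot_def shift using assms by blast+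
qed

lemma block_vertex_block_slot: "v \<ge> 1 \<Longrightarrow> block_vertex k (block k v) (slot k v) = v"
  unfolding block_def slot_def block_vertex_def
  by (metis add.commute div_mult_mod_eq le_add_diff_inverse)

lemma inj_block_vertex: "inj (block_vertex k i)"
  by (rule injI) (simp add: block_vertex_def)

lemma block_vertex_mem:
  assumes "i < m" and "p < 2 * k + 1"
  shows "block_vertex k i p \<in> verts (gadget_chain k m)"
proof -
  have "Suc i * (2 * k + 1) \<le> m * (2 * k + 1)" using assms(1) by (intro mult_le_mono1) simp
  then show ?thesis using assms(2) unfolding block_vertex_def verts_gadget_chain by simp
qed

lemma slot_le: "slot k v \<le> 2 * k"
  unfolding slot_def using less_Suc_eq_le mod_less_divisor by fastforce

lemma block_less: "v \<in> verts (gadget_chain k m) \<Longrightarrow> block k v < m"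
  unfolding block_def verts_gadget_chain by (auto intro: less_mult_imp_div_less)

lemma adj_gadget_chain:
  "adj (gadget_chain k m) u v \<longleftrightarrow>
     u \<in> verts (gadget_chain k m) \<and> v \<in> verts (gadget_chain k m)
     \<and> (gadget_rel k u v \<or> gadget_rel k v u)"
  by (simp add: gadget_chain_def adj_rel_graph verts_rel_graph)

lemma adj_gadget_chainI:
  assumes "i < m" "j < m" "p < 2 * k + 1" "q < 2 * k + 1"
    and "gadget_rel k (block_vertex k i p) (block_vertex k j q)
      \<or> gadget_rel k (block_vertex k j q) (block_vertex k i p)"
  shows "adj (gadget_chain k m) (block_vertex k i p) (block_vertex k j q)"
  using assms block_vertex_mem by (simp add: adj_gadget_chain)

lemma adj_gadget_chain_ringD:
  assumes "slot k v < 2 * k" and "adj (gadget_chain k m) u v"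
  shows "block k u = block k v \<and>
    (slot k u < 2 * k \<and> (cycle_sq_step (2 * k) (slot k u) (slot k v)
                          \<or> cycle_sq_step (2 * k) (slot k v) (slot k u))
     \<or> slot k u = 2 * k \<and> slot k v = 0)"
  using assms unfolding adj_gadget_chain gadget_rel_def by auto

lemma connected_gadget_chain: "connected_graph (gadget_chain k m)"
proof (rule connected_graphI_root)
  let ?E = "{(x, y). adj (gadget_chain k m) x y}"
  have hub_to_root: "(block_vertex k i (2 * k), block_vertex k 0 (2 * k)) \<in> ?E\<^sup>*" if "i < m" for i
    using that
  proof (induction i)
    case (Suc i)
    have "(block_vertex k (Suc i) (2 * k), block_vertex k i (2 * k)) \<in> ?E"
      using Suc.prems
      by (auto intro: adj_gadget_chainI simp: gadget_rel_def block_slot_block_vertex)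
    then show ?case using Suc by (meson Suc_lessD converse_rtrancl_into_rtrancl)
  qed simp
  have ring_to_hub: "(block_vertex k i p, block_vertex k i (2 * k)) \<in> ?E\<^sup>*"
    if "i < m" "p < 2 * k" for i p
    using that(2)
  proof (induction p)
    case 0
    have "(block_vertex k i 0, block_vertex k i (2 * k)) \<in> ?E"
      using that(1) by (auto intro: adj_gadget_chainI simp: gadget_rel_def block_slot_block_vertex)
    then show ?case by blast
  next
    case (Suc p)
    have "(block_vertex k i (Suc p), block_vertex k i p) \<in> ?E"
      using that(1) Suc.prems
      by (auto intro: adj_gadget_chainI simp: gadget_rel_def cycle_sq_step_def block_slot_block_vertex)
    then show ?case using Suc by (meson Suc_lessD converse_rtrancl_into_rtrancl)
  qed
  fix v assume "v \<in> verts (gadget_chain k m)"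
  then have v: "v = block_vertex k (block k v) (slot k v)" and i: "block k v < m"
    using block_vertex_block_slot block_less by (auto simp: verts_gadget_chain)
  show "(v, block_vertex k 0 (2 * k)) \<in> ?E\<^sup>*"
  proof (cases "slot k v = 2 * k")
    case True
    then show ?thesis using hub_to_root[OF i] v by simp
  next
    case False
    then have "slot k v < 2 * k" using slot_le le_neq_implies_less by blast
    then show ?thesis using ring_to_hub[OF i] hub_to_root[OF i] v by (metis rtrancl_trans)
  qed
qed

lemma gadget_chain_conn_graphs:
  assumes "k \<ge> 2" and "m \<ge> 1"
  shows "gadget_chain k m \<in> conn_graphs"
proof -
  have "\<not> gadget_rel k u u" for u
    using cycle_sq_step_irrefl[of "2 * k" "slot k u"] assms(1) unfolding gadget_rel_def by auto
  then have "simple_graph (gadget_chain k m)"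
    unfolding gadget_chain_def by (rule simple_rel_graph)
  then show ?thesis using connected_gadget_chain assms(2)
    unfolding conn_graphs_def by (simp add: gadget_chain_def rel_graph_def)
qed

lemma inj_gadget_chain: "inj (gadget_chain k)"
proof (rule injI)
  fix m m' assume "gadget_chain k m = gadget_chain k m'"
  then have "fst (gadget_chain k m) = fst (gadget_chain k m')" by simp
  then show "m = m'"
    using mult_right_cancel[of "2 * k + 1" m m'] by (simp add: gadget_chain_def rel_graph_def)
qed

section \<open>Isolating the cycle in the gadget chain\<close>

lemma dominated_ring_vertex:
  assumes "slot k v < 2 * k" and "v \<in> closed_nbhd (gadget_chain k m) D"
    and "{u \<in> D. block k u = block k v} \<subseteq> {y}"
  shows "slot k y < 2 * k \<and> (slot k y = slot k v \<or> cycle_sq_step (2 * k) (slot k y) (slot k v)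
                                \<or> cycle_sq_step (2 * k) (slot k v) (slot k y))
    \<or> slot k y = 2 * k \<and> slot k v = 0"
proof -
  obtain u where "u \<in> D" and u: "u = v \<or> adj (gadget_chain k m) u v"
    using assms(2) unfolding closed_nbhd_def by blast
  moreover have "block k u = block k v"
    using u adj_gadget_chain_ringD[OF assms(1)] by auto
  ultimately have "u = y" using assms(3) by auto
  then show ?thesis using u adj_gadget_chain_ringD[OF assms(1), of m y] assms(1) by auto
qed

lemma cycle_survives_in_block:
  assumes "k \<ge> 5" and "i < m" and D: "{v \<in> D. block k v = i} \<subseteq> {y}"
  shows "subgraph_iso_in (cycle_graph k) (gadget_chain k m)
           (verts (gadget_chain k m) - closed_nbhd (gadget_chain k m) D)"
proof -
  let ?G = "gadget_chain k m"
  \<comment> \<open>A hub dominates only ring position \<open>0\<close>.\<close>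
  define q where "q = (if slot k y < 2 * k then slot k y else 0)"
  define f where "f = block_vertex k i \<circ> zigzag_slot k q"
  have q: "q < 2 * k" using assms(1) unfolding q_def by auto
  have slot_less: "zigzag_slot k q a < 2 * k" for a
    using zigzag_slot_less assms(1) by simp
  then have f: "block k (f a) = i" "slot k (f a) = zigzag_slot k q a" "f a \<in> verts ?G" for a
    unfolding f_def using block_slot_block_vertex block_vertex_mem[OF assms(2)]
    by (simp_all add: less_SucI)
  have "inj_on f {1..k}"
    unfolding f_def
    by (rule comp_inj_on[OF inj_on_zigzag_slot inj_on_subset[OF inj_block_vertex subset_UNIV]])
  moreover have "f a \<notin> closed_nbhd ?G D" if "a \<in> {1..k}" for a
  proof
    assume "f a \<in> closed_nbhd ?G D"
    then show False
      using dominated_ring_vertex[of k "f a" m D y] zigzag_slot_far[OF assms(1) q that]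
        slot_less[of a] D slot_le[of k y]
      unfolding f q_def by (auto split: if_splits)
  qed
  moreover have "adj ?G (f a) (f b)"
    if "a \<in> {1..k}" "b \<in> {1..k}" "adj (cycle_graph k) a b" for a b
  proof -
    have "gadget_rel k (f a) (f b) \<or> gadget_rel k (f b) (f a)"
      using zigzag_slot_adjacent[OF _ that(3), of q] assms(1) slot_less f(1,2)
      unfolding gadget_rel_def by simp blast
    then show ?thesis using f(3) by (simp add: adj_gadget_chain)
  qed
  moreover have "verts (cycle_graph k) = {1..k}" by (simp add: verts_def cycle_graph_def)
  ultimately show ?thesis unfolding subgraph_iso_in_def
    by (intro exI[of _ f]) (auto simp: f(3))
qed

lemma two_le_card_block:
  assumes "k \<ge> 5" and "i < m" and "isolating (gadget_chain k m) {cycle_graph k} D"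
  shows "2 \<le> card {v \<in> D. block k v = i}"
proof (rule ccontr)
  let ?S = "{v \<in> D. block k v = i}"
  assume "\<not> 2 \<le> card ?S"
  then have "card ?S \<le> Suc 0" by simp
  moreover have "finite ?S" using finite_isolating[OF assms(3)] by simp
  ultimately have "\<forall>u \<in> ?S. \<forall>w \<in> ?S. u = w" by (simp only: card_le_Suc0_iff_eq)
  then obtain y where "?S \<subseteq> {y}" by blast
  then have "subgraph_iso_in (cycle_graph k) (gadget_chain k m)
      (verts (gadget_chain k m) - closed_nbhd (gadget_chain k m) D)"
    by (rule cycle_survives_in_block[OF assms(1,2)])
  then show False using assms(3) unfolding isolating_def by simp
qed

lemma iota_gadget_chain:
  assumes "k \<ge> 5"
  shows "2 * m \<le> iota (gadget_chain k m) {cycle_graph k}"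
proof (rule iota_geI)
  show "fst H \<ge> 1" if "H \<in> {cycle_graph k}" for H
    using that assms by (simp add: cycle_graph_def)
  fix D assume D: "isolating (gadget_chain k m) {cycle_graph k} D"
  then show "2 * m \<le> card D"
    using mult_le_card_fibres[OF finite_isolating[OF D], of m 2 "block k"]
      two_le_card_block[OF assms _ D]
    by (simp add: mult.commute)
qed

lemma gadget_chain_G_gt:
  assumes "k \<ge> 5" and "m \<ge> 1" and "c * (2 * real k + 1) < 2"
  shows "gadget_chain k m \<in> G_gt {cycle_graph k} c"
proof (rule G_gtI)
  show "gadget_chain k m \<in> conn_graphs" using gadget_chain_conn_graphs assms(1,2) by simp
  have "c * real (fst (gadget_chain k m)) = real m * (c * (2 * real k + 1))"
    by (simp add: gadget_chain_def rel_graph_def algebra_simps)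
  also have "\<dots> < 2 * real m" using assms(2,3) by simp
  also have "\<dots> \<le> real (iota (gadget_chain k m) {cycle_graph k})"
    using iota_gadget_chain[OF assms(1), of m] by linarith
  finally show "c * real (fst (gadget_chain k m)) < real (iota (gadget_chain k m) {cycle_graph k})" .
qed

theorem proposition2:
  fixes k :: nat and c :: real
  assumes "k \<ge> 5"
    and "c \<in> \<rat>" and "c > 0"
    and "finite (G_gt {cycle_graph k} c)"
    and "infinite (G_eq {cycle_graph k} c)"
  shows "c \<ge> 2 / (2 * real k + 1)"
proof (rule ccontr)
  assume "\<not> c \<ge> 2 / (2 * real k + 1)"
  then have "c * (2 * real k + 1) < 2" by (simp add: field_simps)
  then have "gadget_chain k ` {1..} \<subseteq> G_gt {cycle_graph k} c"
    using gadget_chain_G_gt[OF assms(1)] by auto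
  moreover have "infinite (gadget_chain k ` {1..})"
    using inj_on_subset[OF inj_gadget_chain] by (simp add: finite_image_iff infinite_Ici)
  ultimately have "infinite (G_gt {cycle_graph k} c)" by (rule infinite_super)
  then show False using assms(4) by contradiction
qed

end
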